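(* Given an instance of the Squared Metric Facility Location Problem, let $\alpha$ be the vector of final budgets produced by Algorithm $A1$. Then for every facility $i$, cities $j$ and $j'$, and all positive reals $\beta,\gamma,\delta$, $$ \alpha_j \le \Big(1 + \beta + \frac{1}{\gamma}\Big) \alpha_{j'} + \Big(1 + \gamma + \frac{1}{\delta}\Big) c_{ij'} + \Big(1 + \delta + \frac{1}{\beta} \Big) c_{ij}. $$
   Context: Facility Location instance: finite disjoint sets $C$ (cities), $F$ (facilities), non-negative $c_{ij}$, $f_i$. Squared metric: $\sqrt{c_{ij}}\le \sqrt{c_{ij'}}+\sqrt{c_{i'j'}}+\sqrt{c_{i'j}}$ for all $i,i'\in F$, $j,j'\in C$. Algorithm $A1$: initially all facilities are unopened and all cities unconnected ($U:=C$); each city $j$ has a budget $\alpha_j=0$; an unconnected city $j$ offers $\max(\alpha_j-c_{ij},0)$ to each unopened facility $i$. While $U\ne\emptyset$, the budgets of all unconnected cities increase continuously at the same rate (connected cities' budgets stay fixed) until: (a) for some unconnected $j$ and open $i$, $\alpha_j=c_{ij}$: connect $j$ to $i$ and remove $j$ from $U$; or (b) for some unopened $i$, $\sum_{j\in U}\max(\alpha_j-c_{ij},0)=f_i$: open $i$ and connect to $i$ every unconnected $j$ with $\alpha_j\ge c_{ij}$, removing them from $U$. *)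

theory Defs
  imports Complex_Main
begin

definition squared_metric :: "'c set \<Rightarrow> 'f set \<Rightarrow> ('f \<Rightarrow> 'c \<Rightarrow> real) \<Rightarrow> bool" where
  "squared_metric C F c \<longleftrightarrow>
     (\<forall>i\<in>F. \<forall>i'\<in>F. \<forall>j\<in>C. \<forall>j'\<in>C.
        sqrt (c i j) \<le> sqrt (c i j') + sqrt (c i' j') + sqrt (c i' j))"

text \<open>State of Algorithm A1: (set of open facilities, set U of unconnected cities, budgets alpha).
  Budgets of unconnected cities all grow at the same rate; connected cities keep their budget.\<close>

type_synonym ('c, 'f) A1_state = "'f set \<times> 'c set \<times> ('c \<Rightarrow> real)"

definition A1_event ::
  "'f set \<Rightarrow> ('f \<Rightarrow> 'c \<Rightarrow> real) \<Rightarrow> ('f \<Rightarrow> real) \<Rightarrow> 'f set \<Rightarrow> 'c set \<Rightarrow> ('c \<Rightarrow> real) \<Rightarrow> bool" where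
  "A1_event F c f Op U \<alpha> \<longleftrightarrow>
     (\<exists>j\<in>U. \<exists>i\<in>Op. \<alpha> j = c i j) \<or>
     (\<exists>i\<in>F - Op. (\<Sum>j\<in>U. max (\<alpha> j - c i j) 0) = f i)"

inductive A1_step ::
  "'f set \<Rightarrow> ('f \<Rightarrow> 'c \<Rightarrow> real) \<Rightarrow> ('f \<Rightarrow> real) \<Rightarrow> ('c, 'f) A1_state \<Rightarrow> ('c, 'f) A1_state \<Rightarrow> bool"
  for F c f where
  connect: "\<lbrakk> U \<noteq> {}; j \<in> U; i \<in> Op; \<alpha> j = c i j \<rbrakk>
            \<Longrightarrow> A1_step F c f (Op, U, \<alpha>) (Op, U - {j}, \<alpha>)"
| open_fac: "\<lbrakk> U \<noteq> {}; i \<in> F; i \<notin> Op; (\<Sum>j\<in>U. max (\<alpha> j - c i j) 0) = f i \<rbrakk>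
            \<Longrightarrow> A1_step F c f (Op, U, \<alpha>) (insert i Op, U - {j\<in>U. c i j \<le> \<alpha> j}, \<alpha>)"
| grow: "\<lbrakk> U \<noteq> {}; d > 0;
           \<forall>s. 0 \<le> s \<and> s < d \<longrightarrow>
               \<not> A1_event F c f Op U (\<lambda>j. if j \<in> U then \<alpha> j + s else \<alpha> j) \<rbrakk>
         \<Longrightarrow> A1_step F c f (Op, U, \<alpha>) (Op, U, \<lambda>j. if j \<in> U then \<alpha> j + d else \<alpha> j)"

definition A1_final_budgets ::
  "'c set \<Rightarrow> 'f set \<Rightarrow> ('f \<Rightarrow> 'c \<Rightarrow> real) \<Rightarrow> ('f \<Rightarrow> real) \<Rightarrow> ('c \<Rightarrow> real) \<Rightarrow> bool" where
  "A1_final_budgets C F c f \<alpha> \<longleftrightarrow>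
     (\<exists>Op. (A1_step F c f)\<^sup>*\<^sup>* ({}, C, \<lambda>_. 0) (Op, {}, \<alpha>))"

end

theory Submission
  imports Defs
begin

(* Every connected city j' has an open facility i' with c i' j' <= alpha j' such that every city j
  with a larger budget satisfies alpha j <= c i' j.  The squared triangle inequality along
  j, i', j', i then bounds alpha j by the square of sqrt (alpha j') + sqrt (c i j') + sqrt (c i j),
  and the weighted AM-GM inequality 2xy <= t x^2 + y^2/t applied to the three cross terms gives
  the stated coefficients.  The witness property is invariant under the algorithm because every
  unconnected city has maximal budget, and during growth no unconnected budget passes the cost
  of an open facility. *)

lemma two_mult_le_weighted_squares:
  fixes t x y :: real
  assumes "t > 0"
  shows "2 * x * y \<le> t * x\<^sup>2 + y\<^sup>2 / t"
proof -
  have "t * (2 * x * y) \<le> t * (t * x\<^sup>2 + y\<^sup>2 / t)"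
    using assms sum_squares_ge_zero[of "t * x - y" 0]
    by (simp add: power2_eq_square algebra_simps)
  then show ?thesis
    using assms by simp
qed

lemma square_sum3_le:
  fixes a b d \<beta> \<gamma> \<delta> :: real
  assumes "\<beta> > 0" and "\<gamma> > 0" and "\<delta> > 0"
  shows "(a + b + d)\<^sup>2 \<le> (1 + \<beta> + 1/\<gamma>) * a\<^sup>2 + (1 + \<gamma> + 1/\<delta>) * b\<^sup>2 + (1 + \<delta> + 1/\<beta>) * d\<^sup>2"
proof -
  have "(a + b + d)\<^sup>2 = a\<^sup>2 + b\<^sup>2 + d\<^sup>2 + 2 * b * a + 2 * d * b + 2 * a * d"
    by (simp add: power2_eq_square algebra_simps)
  also have "\<dots> \<le> a\<^sup>2 + b\<^sup>2 + d\<^sup>2 + (\<gamma> * b\<^sup>2 + a\<^sup>2 / \<gamma>) + (\<delta> * d\<^sup>2 + b\<^sup>2 / \<delta>) + (\<beta> * a\<^sup>2 + d\<^sup>2 / \<beta>)"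
    using two_mult_le_weighted_squares[OF assms(2), of b a]
      two_mult_le_weighted_squares[OF assms(3), of d b]
      two_mult_le_weighted_squares[OF assms(1), of a d]
    by linarith
  also have "\<dots> = (1 + \<beta> + 1/\<gamma>) * a\<^sup>2 + (1 + \<gamma> + 1/\<delta>) * b\<^sup>2 + (1 + \<delta> + 1/\<beta>) * d\<^sup>2"
    by (simp add: algebra_simps)
  finally show ?thesis .
qed

lemma le_weighted_sum_if_sqrt_le_sum3:
  fixes x y z w \<beta> \<gamma> \<delta> :: real
  assumes "0 \<le> x" "0 \<le> y" "0 \<le> z" "0 \<le> w"
    and "sqrt x \<le> sqrt y + sqrt z + sqrt w"
    and "\<beta> > 0" and "\<gamma> > 0" and "\<delta> > 0"
  shows "x \<le> (1 + \<beta> + 1/\<gamma>) * y + (1 + \<gamma> + 1/\<delta>) * z + (1 + \<delta> + 1/\<beta>) * w"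
proof -
  have "x = (sqrt x)\<^sup>2"
    using assms(1) by simp
  also have "\<dots> \<le> (sqrt y + sqrt z + sqrt w)\<^sup>2"
    using assms(1,5) by (intro power_mono) simp_all
  also have "\<dots> \<le> (1 + \<beta> + 1/\<gamma>) * (sqrt y)\<^sup>2 + (1 + \<gamma> + 1/\<delta>) * (sqrt z)\<^sup>2 + (1 + \<delta> + 1/\<beta>) * (sqrt w)\<^sup>2"
    using square_sum3_le[OF assms(6-8)] .
  finally show ?thesis
    using assms(2-4) by simp
qed

definition witnessed :: "'c set \<Rightarrow> ('f \<Rightarrow> 'c \<Rightarrow> real) \<Rightarrow> 'f set \<Rightarrow> ('c \<Rightarrow> real) \<Rightarrow> 'c \<Rightarrow> bool" where
  "witnessed C c Op \<alpha> j' \<longleftrightarrow>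
     (\<exists>i'\<in>Op. c i' j' \<le> \<alpha> j' \<and> (\<forall>j\<in>C. \<alpha> j \<le> \<alpha> j' \<or> \<alpha> j \<le> c i' j))"

lemma witnessed_mono_facilities:
  "witnessed C c Op \<alpha> j \<Longrightarrow> Op \<subseteq> Op' \<Longrightarrow> witnessed C c Op' \<alpha> j"
  unfolding witnessed_def by blast

lemma witnessed_if_max_budget:
  "i \<in> Op \<Longrightarrow> c i j \<le> \<alpha> j \<Longrightarrow> \<forall>k\<in>C. \<alpha> k \<le> \<alpha> j \<Longrightarrow> witnessed C c Op \<alpha> j"
  unfolding witnessed_def by blast

lemma witnessed_budget_bound:
  fixes \<beta> \<gamma> \<delta> :: real
  assumes "squared_metric C F c" and "\<forall>i\<in>F. \<forall>j\<in>C. c i j \<ge> 0"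
    and "Op \<subseteq> F" and "\<forall>j. 0 \<le> \<alpha> j" and "witnessed C c Op \<alpha> j'"
    and "i \<in> F" and "j \<in> C" and "j' \<in> C"
    and "\<beta> > 0" and "\<gamma> > 0" and "\<delta> > 0"
  shows "\<alpha> j \<le> (1 + \<beta> + 1/\<gamma>) * \<alpha> j' + (1 + \<gamma> + 1/\<delta>) * c i j' + (1 + \<delta> + 1/\<beta>) * c i j"
proof -
  obtain i' where i': "i' \<in> F" "c i' j' \<le> \<alpha> j'" "\<alpha> j \<le> \<alpha> j' \<or> \<alpha> j \<le> c i' j"
    using assms(3,5,7) unfolding witnessed_def by blast
  have costs: "0 \<le> c i j" "0 \<le> c i j'"
    using assms(2,6-8) by auto
  show ?thesis
  proof (cases "\<alpha> j \<le> \<alpha> j'")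
    case True
    moreover have "\<alpha> j' \<le> (1 + \<beta> + 1/\<gamma>) * \<alpha> j'"
      using mult_right_mono[of 1 "1 + \<beta> + 1/\<gamma>" "\<alpha> j'"] assms(4,9,10) by simp
    moreover have "0 \<le> (1 + \<gamma> + 1/\<delta>) * c i j'" "0 \<le> (1 + \<delta> + 1/\<beta>) * c i j"
      using assms(9-11) costs by simp_all
    ultimately show ?thesis
      by linarith
  next
    case False
    then have "sqrt (\<alpha> j) \<le> sqrt (c i' j)"
      using i'(3) by simp
    also have "\<dots> \<le> sqrt (c i' j') + sqrt (c i j') + sqrt (c i j)"
      using assms(1,6-8) i'(1) unfolding squared_metric_def by blast
    also have "\<dots> \<le> sqrt (\<alpha> j') + sqrt (c i j') + sqrt (c i j)"
      using i'(2) by simp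
    finally show ?thesis
      using le_weighted_sum_if_sqrt_le_sum3 assms(4,9-11) costs by blast
  qed
qed

fun A1_invariant :: "'c set \<Rightarrow> 'f set \<Rightarrow> ('f \<Rightarrow> 'c \<Rightarrow> real) \<Rightarrow> ('c, 'f) A1_state \<Rightarrow> bool" where
  "A1_invariant C F c (Op, U, \<alpha>) \<longleftrightarrow>
     Op \<subseteq> F \<and> (\<forall>j. 0 \<le> \<alpha> j) \<and> (\<forall>j\<in>U. \<forall>i\<in>Op. \<alpha> j \<le> c i j)
     \<and> (\<forall>j\<in>U. \<forall>k\<in>C. \<alpha> k \<le> \<alpha> j) \<and> (\<forall>j\<in>C - U. witnessed C c Op \<alpha> j)"

lemma growth_below_open_costs:
  assumes "\<forall>s. 0 \<le> s \<and> s < d \<longrightarrow> \<not> A1_event F c f Op U (\<lambda>j. if j \<in> U then \<alpha> j + s else \<alpha> j)"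
    and "j \<in> U" and "i \<in> Op" and "\<alpha> j \<le> c i j"
  shows "\<alpha> j + d \<le> c i j"
proof (rule ccontr)
  assume "\<not> \<alpha> j + d \<le> c i j"
  then have "\<not> A1_event F c f Op U (\<lambda>k. if k \<in> U then \<alpha> k + (c i j - \<alpha> j) else \<alpha> k)"
    using assms(1,4) by simp
  moreover have "A1_event F c f Op U (\<lambda>k. if k \<in> U then \<alpha> k + (c i j - \<alpha> j) else \<alpha> k)"
    using assms(2,3) unfolding A1_event_def by force
  ultimately show False
    by contradiction
qed

lemma A1_step_invariant:
  assumes "A1_step F c f st st'" and "A1_invariant C F c st"
  shows "A1_invariant C F c st'"
  using assms
proof (induction rule: A1_step.induct)
  case (connect U j i Op \<alpha>)
  then have "witnessed C c Op \<alpha> j"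
    by (intro witnessed_if_max_budget) auto
  with connect show ?case
    by auto
next
  case (open_fac U i Op \<alpha>)
  have "witnessed C c (insert i Op) \<alpha> j" if "j \<in> U" "c i j \<le> \<alpha> j" for j
    using open_fac.prems that by (intro witnessed_if_max_budget) auto
  moreover have "witnessed C c (insert i Op) \<alpha> j" if "j \<in> C - U" for j
    using open_fac.prems that witnessed_mono_facilities[of C c Op \<alpha> j] by auto
  ultimately show ?case
    using open_fac by auto
next
  case (grow U d Op \<alpha>)
  define \<alpha>' where "\<alpha>' = (\<lambda>j. if j \<in> U then \<alpha> j + d else \<alpha> j)"
  have below: "\<alpha>' j \<le> c i j" if "j \<in> U" "i \<in> Op" for i j
    using growth_below_open_costs[OF grow.hyps(3) that] grow.prems that
    unfolding \<alpha>'_def by simp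
  have "witnessed C c Op \<alpha>' j'" if connected: "j' \<in> C - U" for j'
  proof -
    have "witnessed C c Op \<alpha> j'"
      using grow.prems connected by simp
    then obtain i' where "i' \<in> Op" "c i' j' \<le> \<alpha> j'" "\<forall>j\<in>C. \<alpha> j \<le> \<alpha> j' \<or> \<alpha> j \<le> c i' j"
      unfolding witnessed_def by blast
    then show ?thesis
      using connected below unfolding witnessed_def \<alpha>'_def by (intro bexI[of _ i']) auto
  qed
  moreover have "\<forall>j\<in>U. \<forall>k\<in>C. \<alpha>' k \<le> \<alpha>' j" "\<forall>j. 0 \<le> \<alpha>' j"
    using grow unfolding \<alpha>'_def by (auto simp: add_increasing2)
  ultimately have "A1_invariant C F c (Op, U, \<alpha>')"
    using grow.prems below by simp
  then show ?case
    unfolding \<alpha>'_def .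
qed

lemma A1_reachable_invariant:
  "(A1_step F c f)\<^sup>*\<^sup>* st st' \<Longrightarrow> A1_invariant C F c st \<Longrightarrow> A1_invariant C F c st'"
  by (induction rule: rtranclp_induct) (blast intro: A1_step_invariant)+

theorem lemma3:
  fixes C :: "'c set" and F :: "'f set" and c :: "'f \<Rightarrow> 'c \<Rightarrow> real" and f :: "'f \<Rightarrow> real"
    and \<alpha> :: "'c \<Rightarrow> real" and \<beta> \<gamma> \<delta> :: real
  assumes "finite C" and "finite F"
    and "\<forall>i\<in>F. \<forall>j\<in>C. c i j \<ge> 0" and "\<forall>i\<in>F. f i \<ge> 0"
    and "squared_metric C F c"
    and "A1_final_budgets C F c f \<alpha>"
    and "i \<in> F" and "j \<in> C" and "j' \<in> C"
    and "\<beta> > 0" and "\<gamma> > 0" and "\<delta> > 0"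
  shows "\<alpha> j \<le> (1 + \<beta> + 1/\<gamma>) * \<alpha> j' + (1 + \<gamma> + 1/\<delta>) * c i j' + (1 + \<delta> + 1/\<beta>) * c i j"
proof -
  obtain Op where run: "(A1_step F c f)\<^sup>*\<^sup>* ({}, C, \<lambda>_. 0) (Op, {}, \<alpha>)"
    using assms(6) unfolding A1_final_budgets_def by blast
  have "A1_invariant C F c ({}, C, \<lambda>_. 0)"
    by simp
  with run have "A1_invariant C F c (Op, {}, \<alpha>)"
    by (rule A1_reachable_invariant)
  then have "Op \<subseteq> F" "\<forall>j. 0 \<le> \<alpha> j" "witnessed C c Op \<alpha> j'"
    using assms(9) by simp_all
  then show ?thesis
    by (rule witnessed_budget_bound[OF assms(5,3) _ _ _ assms(7-12)])
qed

end
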